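(* Let $G=(V,E)$ be a Bitcoin network, let $N,P\in V$, and let $M\in\Gamma$ be a legitimate monitor. Suppose $M$ executes the procedure $PeeV(N)$ and the nodes $N$ and $P$ execute the procedure $HandleMarker$ on every marker message they receive. Then the output $L_N^M$ of $PeeV(N)$ satisfies $$P\in L_N^M \iff (N,P)\in E.$$
   Context: A Bitcoin network is modeled as a directed graph $G=(V,E)$ whose vertices are the (reachable) nodes; $(N,P)\in E$, also written $N\to P$, means that $N$ has an outbound connection to $P$. For a node $X$, its outbound peers are $O_X=\{Y:(X,Y)\in E\}$ and its inbound peers are $I_X=\{Y:(Y,X)\in E\}$. $\Gamma$ is a fixed set of legitimate monitors; each monitor is connected to every node, and these monitor connections are not part of $E$. A marker message is a triple $[N,M,r]$ (target $N$, monitor $M$, value $r$). Procedure $PeeV(N)$, run by monitor $M$: start with an empty list $L_N^M$; draw a random value $r$; send the marker $[N,M,r]$ to $N$; until a timeout $t$ expires, whenever a marker is received from some node $P$ and it equals $[N,M,r]$, set $L_N^M:=L_N^M\cup\{P\}$; when the timeout expires, output $L_N^M$. Procedure $HandleMarker(pfrom,[N,M,r])$, run by a node $X$ on receiving a marker from sender $pfrom$: if $pfrom=M$ and $M\in\Gamma$, send the marker to every outbound peer of $X$; if $pfrom=N$ and $N$ is an inbound peer of $X$, send the marker to $M$; otherwise do nothing. Standing assumptions of this result: all nodes are honest (follow the procedures), no connection is established or dropped during the execution, and every sent message is delivered, with the timeout $t$ longer than the time needed for a marker to travel $M\to N\to P\to M$. *)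

theory Defs
  imports Complex_Main
begin

text \<open>
  Model of one execution of PeeV(N) by monitor M with random value r.
  Nodes and monitors share one type 'a; V is the set of (reachable) nodes,
  E \<subseteq> V \<times> V the outbound-connection relation, Gam the set of legitimate
  monitors (disjoint from V; monitor connections are not in E).
  A marker is a triple (target, monitor, value).
  Message delivery over a link (X,Y) takes delay dl X Y (reliable delivery).
  A sent message is recorded as (sender, receiver, marker, send time).
  All nodes are honest and run HandleMarker on every marker they receive
  (immediately upon delivery); the only marker injected into the network is
  the one sent by M at time 0 in PeeV(N).
\<close>

type_synonym ('a, 'r) marker = "'a \<times> 'a \<times> 'r"

inductive sent ::
  "'a set \<Rightarrow> ('a \<times> 'a) set \<Rightarrow> 'a set \<Rightarrow> ('a \<Rightarrow> 'a \<Rightarrow> real) \<Rightarrow> 'a \<Rightarrow> 'a \<Rightarrow> 'r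
   \<Rightarrow> 'a \<Rightarrow> 'a \<Rightarrow> ('a, 'r) marker \<Rightarrow> real \<Rightarrow> bool"
  for V E Gam dl M N r
where
  peev_send: "sent V E Gam dl M N r M N (N, M, r) 0"
| fwd_outbound:
    "\<lbrakk> sent V E Gam dl M N r pfrom X (N', M', r') s; X \<in> V;
       pfrom = M'; M' \<in> Gam; (X, Y) \<in> E \<rbrakk>
     \<Longrightarrow> sent V E Gam dl M N r X Y (N', M', r') (s + dl pfrom X)"
| reply_monitor:
    "\<lbrakk> sent V E Gam dl M N r pfrom X (N', M', r') s; X \<in> V;
       \<not> (pfrom = M' \<and> M' \<in> Gam); pfrom = N'; (N', X) \<in> E \<rbrakk>
     \<Longrightarrow> sent V E Gam dl M N r X M' (N', M', r') (s + dl pfrom X)"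

definition peev_output ::
  "'a set \<Rightarrow> ('a \<times> 'a) set \<Rightarrow> 'a set \<Rightarrow> ('a \<Rightarrow> 'a \<Rightarrow> real) \<Rightarrow> real \<Rightarrow> 'a \<Rightarrow> 'a \<Rightarrow> 'r \<Rightarrow> 'a set"
where
  "peev_output V E Gam dl t M N r =
     {P. \<exists>s. sent V E Gam dl M N r P M (N, M, r) s \<and> s + dl P M < t}"

end

theory Submission
  imports Defs
begin

text \<open>
  Only three kinds of messages ever carry a marker: M's marker to N, N's forwarded copies to
  its outbound peers, and the replies of those peers to M. No other node forwards, because
  only N receives the marker directly from the monitor; no other node replies, because only
  copies sent by N reach anyone; and M, not being a node, neither reacts nor is an outbound
  peer of N. The timeout then admits every reply, as it covers each round trip M-N-P-M.
\<close>

lemma sent_iff: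
  assumes "Gam \<inter> V = {}" and "M \<in> Gam" and "N \<in> V"
  shows "sent V E Gam dl M N r a b m s \<longleftrightarrow>
    m = (N, M, r) \<and>
    (a = M \<and> b = N \<and> s = 0 \<or>
     a = N \<and> (N, b) \<in> E \<and> s = dl M N \<or>
     a \<in> V \<and> (N, a) \<in> E \<and> b = M \<and> s = dl M N + dl N a)"
  (is "_ \<longleftrightarrow> ?rhs")
proof
  have "M \<noteq> N" "M \<notin> V" using assms by auto
  show "sent V E Gam dl M N r a b m s \<Longrightarrow> ?rhs"
    by (induction rule: sent.induct) (use \<open>M \<noteq> N\<close> \<open>M \<notin> V\<close> in auto)
next
  have MN: "M \<noteq> N" using assms by auto
  have to_N: "sent V E Gam dl M N r M N (N, M, r) 0"
    by (rule sent.peev_send)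
  have to_peer: "sent V E Gam dl M N r N Y (N, M, r) (dl M N)" if "(N, Y) \<in> E" for Y
    using sent.fwd_outbound[OF to_N \<open>N \<in> V\<close> refl \<open>M \<in> Gam\<close> that] by simp
  have to_M: "sent V E Gam dl M N r Y M (N, M, r) (dl M N + dl N Y)"
    if "Y \<in> V" and "(N, Y) \<in> E" for Y
    using sent.reply_monitor[OF to_peer[OF \<open>(N, Y) \<in> E\<close>] \<open>Y \<in> V\<close> _ refl \<open>(N, Y) \<in> E\<close>] MN
    by simp
  show "?rhs \<Longrightarrow> sent V E Gam dl M N r a b m s"
    using to_N to_peer to_M by auto
qed

lemma peev_output_eq:
  assumes "E \<subseteq> V \<times> V" and "Gam \<inter> V = {}" and "M \<in> Gam" and "N \<in> V"
  shows "peev_output V E Gam dl t M N r = {P. (N, P) \<in> E \<and> dl M N + dl N P + dl P M < t}"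
  using assms unfolding peev_output_def sent_iff[OF assms(2-4)] by auto

theorem theorem1:
  fixes V Gam :: "'a set" and E :: "('a \<times> 'a) set" and dl :: "'a \<Rightarrow> 'a \<Rightarrow> real"
    and t :: real and M N P :: 'a and r :: 'r
  assumes "E \<subseteq> V \<times> V"
    and "Gam \<inter> V = {}"
    and "M \<in> Gam"
    and "N \<in> V" and "P \<in> V"
    and "\<And>X Y. dl X Y \<ge> 0"
    and "\<And>Q. Q \<in> V \<Longrightarrow> dl M N + dl N Q + dl Q M < t"
  shows "P \<in> peev_output V E Gam dl t M N r \<longleftrightarrow> (N, P) \<in> E"
  using peev_output_eq[OF assms(1-4), of dl t r] assms(5,7) by auto

end
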